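(* Let $n,k,i$ be integers with $n\ge k\ge1$ and $0\le i\le n-k$, and let $(\pi_1,\pi_2,\pi_3)\in\mathcal B_{n,k}^{(i)}$. Then (i) $|\min(\pi_1)\cap\min(\pi_3)|=k$; (ii) $|\mathrm{Sing}(\pi_1)\setminus\min(\pi_3)|=i$; (iii) $|\mathrm{Sing}(\pi_3)\setminus\min(\pi_1)|=n-k-i$.
   Context: Let $[n]=\{1,\dots,n\}$ and let $\Pi_{n,m}$ denote the set of partitions of $[n]$ into $m$ nonempty blocks. For a partition $\pi$, $\min(\pi)$ is the set of minima of its blocks and $\mathrm{Sing}(\pi)$ is the set of elements forming singleton blocks of $\pi$. $\mathcal B_{n,k}^{(i)}$ is the set of triples $(\pi_1,\pi_2,\pi_3)\in\Pi_{n,k+i}\times\Pi_{n,k+i}\times\Pi_{n,n-i}$ such that (i) $\min(\pi_1)=\min(\pi_2)$ and $\mathrm{Sing}(\pi_1)=\mathrm{Sing}(\pi_2)$, and (ii) $\min(\pi_1)\cup\mathrm{Sing}(\pi_3)=\mathrm{Sing}(\pi_1)\cup\min(\pi_3)=[n]$. *)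

theory Defs
  imports Main "HOL-Library.Disjoint_Sets"
begin

definition Pi_part :: "nat \<Rightarrow> nat \<Rightarrow> nat set set set" where
  "Pi_part n m = {P. partition_on {1..n} P \<and> card P = m}"

definition mins :: "nat set set \<Rightarrow> nat set" where
  "mins P = Min ` P"

definition Sing :: "nat set set \<Rightarrow> nat set" where
  "Sing P = {x. {x} \<in> P}"

definition B_set :: "nat \<Rightarrow> nat \<Rightarrow> nat \<Rightarrow> (nat set set \<times> nat set set \<times> nat set set) set" where
  "B_set n k i = {(p1, p2, p3).
     p1 \<in> Pi_part n (k + i) \<and> p2 \<in> Pi_part n (k + i) \<and> p3 \<in> Pi_part n (n - i) \<and>
     mins p1 = mins p2 \<and> Sing p1 = Sing p2 \<and>
     mins p1 \<union> Sing p3 = {1..n} \<and> Sing p1 \<union> mins p3 = {1..n}}"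

end

theory Submission
  imports Defs
begin

text \<open>Since singletons are their own minima, \<open>Sing \<pi> \<subseteq> min \<pi>\<close>. Hence the covering
  condition \<open>Sing \<pi>\<^sub>1 \<union> min \<pi>\<^sub>3 = [n]\<close> makes \<open>Sing \<pi>\<^sub>1 - min \<pi>\<^sub>3\<close> the complement of
  \<open>min \<pi>\<^sub>3\<close>, of size \<open>n - (n - i) = i\<close>, and symmetrically \<open>Sing \<pi>\<^sub>3 - min \<pi>\<^sub>1\<close> is the
  complement of \<open>min \<pi>\<^sub>1\<close>, of size \<open>n - k - i\<close>. The complement of \<open>min \<pi>\<^sub>3\<close> lies inside
  \<open>min \<pi>\<^sub>1\<close>, so \<open>min \<pi>\<^sub>1 \<inter> min \<pi>\<^sub>3\<close> has \<open>(k + i) - i = k\<close> elements.\<close>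

lemma Sing_subset_mins: "Sing P \<subseteq> mins P"
  unfolding mins_def Sing_def by (auto intro!: image_eqI[where x="{_}"])

lemma Min_in_block:
  assumes "partition_on A P" and "finite A" and "X \<in> P"
  shows "Min X \<in> X"
proof (rule Min_in)
  have "X \<subseteq> A"
    using partition_onD1[OF assms(1)] assms(3) by blast
  then show "finite X" using assms(2) by (rule finite_subset)
  show "X \<noteq> {}"
    using partition_onD3[OF assms(1)] assms(3) by blast
qed

lemma mins_subset:
  assumes "partition_on A P" and "finite A"
  shows "mins P \<subseteq> A"
  using Min_in_block[OF assms] partition_onD1[OF assms(1)] unfolding mins_def by blast

lemma card_mins:
  assumes "partition_on A P" and "finite A"
  shows "card (mins P) = card P"
proof -
  have "inj_on Min P"
  proof (rule inj_onI)
    fix X Y assume "X \<in> P" "Y \<in> P" "Min X = Min Y"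
    then have "Min X \<in> X \<inter> Y"
      using Min_in_block[OF assms] by (metis IntI)
    then show "X = Y" using partition_onD2[OF assms(1)] \<open>X \<in> P\<close> \<open>Y \<in> P\<close>
      by (auto simp: disjoint_def)
  qed
  then show ?thesis unfolding mins_def by (rule card_image)
qed

lemma Sing_diff_mins_eq_compl:
  assumes "partition_on A P" and "finite A" and "Sing P \<union> mins Q = A"
  shows "Sing P - mins Q = A - mins Q"
  using assms Sing_subset_mins[of P] mins_subset[OF assms(1,2)] by blast

lemma card_Sing_diff_mins:
  assumes "partition_on A P" and "partition_on A Q" and "finite A"
    and "Sing P \<union> mins Q = A"
  shows "card (Sing P - mins Q) = card A - card Q"
proof -
  have "card (A - mins Q) = card A - card (mins Q)"
    using mins_subset[OF assms(2,3)] assms(3) by (meson card_Diff_subset finite_subset)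
  then show ?thesis
    by (simp add: Sing_diff_mins_eq_compl[OF assms(1,3,4)] card_mins[OF assms(2,3)])
qed

theorem lemma12:
  fixes n k i :: nat and p1 p2 p3 :: "nat set set"
  assumes "1 \<le> k" and "k \<le> n" and "i \<le> n - k"
    and "(p1, p2, p3) \<in> B_set n k i"
  shows "card (mins p1 \<inter> mins p3) = k \<and>
         card (Sing p1 - mins p3) = i \<and>
         card (Sing p3 - mins p1) = n - k - i"
proof -
  let ?U = "{1..n}"
  have p1: "partition_on ?U p1" "card p1 = k + i"
   and p3: "partition_on ?U p3" "card p3 = n - i"
   and cover31: "Sing p3 \<union> mins p1 = ?U" and cover13: "Sing p1 \<union> mins p3 = ?U"
    using assms(4) unfolding B_set_def Pi_part_def by (auto simp: Un_commute)
  have finU: "finite ?U" by simp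
  have card13: "card (Sing p1 - mins p3) = i"
    using card_Sing_diff_mins[OF p1(1) p3(1) finU cover13] p3(2) assms(2,3) by simp
  have card31: "card (Sing p3 - mins p1) = n - k - i"
    using card_Sing_diff_mins[OF p3(1) p1(1) finU cover31] p1(2) by simp
  have sub: "Sing p1 - mins p3 \<subseteq> mins p1"
    using Sing_subset_mins[of p1] by blast
  have "finite (Sing p1 - mins p3)"
    using sub mins_subset[OF p1(1) finU] finU by (meson finite_subset)
  then have "card (mins p1 - (Sing p1 - mins p3)) = card (mins p1) - i"
    using card_Diff_subset sub card13 by metis
  moreover have "mins p1 \<inter> mins p3 = mins p1 - (Sing p1 - mins p3)"
    using Sing_diff_mins_eq_compl[OF p1(1) finU cover13] mins_subset[OF p1(1) finU] by blast
  ultimately show ?thesis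
    using card13 card31 card_mins[OF p1(1) finU] p1(2) by simp
qed

end
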